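(* For every $J\subseteq[n]$, the arrangement $\widetilde{\mathcal B_J}$ is free with exponents $(b_{J,1},\dots,b_{J,n})$, where $b_{J,i}=2\,|\{1,\dots,i-1\}\setminus J|+1$.
   Context: $H_\alpha$ is the zero set in $\mathbb C^n$ of a nonzero linear form $\alpha$. $\operatorname{Der}(\mathbb C[\mathbf x_n])=\bigoplus_i\mathbb C[\mathbf x_n]\partial_i$; a derivation $\sum_if_i\partial_i$ is homogeneous of degree $d$ if all $f_i$ are homogeneous of degree $d$. For an arrangement $\mathcal A$, $\operatorname{Der}(\mathcal A)=\{\delta:\alpha\mid\delta(\alpha)\ \forall H_\alpha\in\mathcal A\}$; $\mathcal A$ is free with exponents $(e_1,\dots,e_n)$ if $\operatorname{Der}(\mathcal A)$ has a $\mathbb C[\mathbf x_n]$-basis of homogeneous derivations of degrees $e_1,\dots,e_n$. For $J\subseteq[n]$, $\widetilde{\mathcal B_J}$ is the arrangement consisting of $H_{x_j}$ for all $1\le j\le n$ together with $H_{x_j-x_i}$ and $H_{x_j+x_i}$ for all $j\in[n]\setminus J$ and $j<i\le n$. *)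

theory Defs
  imports Complex_Main "HOL-Library.Poly_Mapping"
begin

text \<open>Polynomials in finitely many commuting variables x_1, x_2, ... over the complex
numbers: finitely supported maps from monomials (exponent vectors, nat =>0 nat)
to coefficients.\<close>
type_synonym mpoly = "(nat \<Rightarrow>\<^sub>0 nat) \<Rightarrow>\<^sub>0 complex"

definition polyring :: "nat \<Rightarrow> mpoly set" where
  "polyring n = {p::mpoly. \<forall>m::nat\<Rightarrow>\<^sub>0 nat \<in> Poly_Mapping.keys p. Poly_Mapping.keys m \<subseteq> {1..n}}"

definition Var :: "nat \<Rightarrow> mpoly" where
  "Var i = Poly_Mapping.single (Poly_Mapping.single i 1) 1"

definition mon_degree :: "(nat \<Rightarrow>\<^sub>0 nat) \<Rightarrow> nat" where
  "mon_degree m = (\<Sum>i\<in>Poly_Mapping.keys m. Poly_Mapping.lookup m i)"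

definition homogeneous :: "nat \<Rightarrow> mpoly \<Rightarrow> bool" where
  "homogeneous d p \<longleftrightarrow> (\<forall>m \<in> Poly_Mapping.keys p. mon_degree m = d)"

definition pdiff :: "nat \<Rightarrow> mpoly \<Rightarrow> mpoly" where
  "pdiff i p = (\<Sum>m\<in>Poly_Mapping.keys p. Poly_Mapping.single (m - Poly_Mapping.single i 1)
                                   (of_nat (Poly_Mapping.lookup m i) * Poly_Mapping.lookup p m))"

text \<open>A derivation of C[x_1,...,x_n] is given by its coefficients f_1,...,f_n
  (the derivation is sum f_i d_i); we represent it as a function
  nat => mpoly, of which only the values at 1..n matter.\<close>
definition is_der :: "nat \<Rightarrow> (nat \<Rightarrow> mpoly) \<Rightarrow> bool" where
  "is_der n \<delta> \<longleftrightarrow> (\<forall>i\<in>{1..n}. \<delta> i \<in> polyring n) \<and> (\<forall>i. i \<notin> {1..n} \<longrightarrow> \<delta> i = 0)"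

definition apply_der :: "nat \<Rightarrow> (nat \<Rightarrow> mpoly) \<Rightarrow> mpoly \<Rightarrow> mpoly" where
  "apply_der n \<delta> p = (\<Sum>i=1..n. \<delta> i * pdiff i p)"

definition homogeneous_der :: "nat \<Rightarrow> nat \<Rightarrow> (nat \<Rightarrow> mpoly) \<Rightarrow> bool" where
  "homogeneous_der n d \<delta> \<longleftrightarrow> (\<forall>i\<in>{1..n}. homogeneous d (\<delta> i))"

text \<open>An arrangement is given by a set of (nonzero) linear forms alpha, one defining
  form for each hyperplane H_alpha.  Der(A) = {delta. alpha divides delta(alpha)
  in C[x_1..x_n] for all alpha}.\<close>
definition Der_arr :: "nat \<Rightarrow> mpoly set \<Rightarrow> (nat \<Rightarrow> mpoly) set" where
  "Der_arr n A = {\<delta>. is_der n \<delta> \<and>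
      (\<forall>\<alpha>\<in>A. \<exists>q\<in>polyring n. apply_der n \<delta> \<alpha> = \<alpha> * q)}"

definition free_with_exponents :: "nat \<Rightarrow> mpoly set \<Rightarrow> (nat \<Rightarrow> nat) \<Rightarrow> bool" where
  "free_with_exponents n A e \<longleftrightarrow>
     (\<exists>\<theta> :: nat \<Rightarrow> nat \<Rightarrow> mpoly.
        (\<forall>j\<in>{1..n}. \<theta> j \<in> Der_arr n A \<and> homogeneous_der n (e j) (\<theta> j)) \<and>
        (\<forall>\<delta>\<in>Der_arr n A. \<exists>g. (\<forall>j\<in>{1..n}. g j \<in> polyring n) \<and>
              (\<forall>i. \<delta> i = (\<Sum>j=1..n. g j * \<theta> j i))) \<and>
        (\<forall>g. (\<forall>j\<in>{1..n}. g j \<in> polyring n) \<and> (\<forall>i. (\<Sum>j=1..n. g j * \<theta> j i) = 0)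
              \<longrightarrow> (\<forall>j\<in>{1..n}. g j = 0)))"

definition B_tilde :: "nat \<Rightarrow> nat set \<Rightarrow> mpoly set" where
  "B_tilde n J = {Var j | j. j \<in> {1..n}}
     \<union> {Var j - Var i | i j. j \<in> {1..n} - J \<and> j < i \<and> i \<le> n}
     \<union> {Var j + Var i | i j. j \<in> {1..n} - J \<and> j < i \<and> i \<le> n}"

end

theory Submission
  imports Defs
begin

text \<open>
  A derivation \<open>\<delta> = \<Sum> \<delta>\<^sub>k \<partial>\<^sub>k\<close> lies in \<open>Der(\<B>\<^sub>J)\<close> iff \<open>x\<^sub>k\<close> divides \<open>\<delta>\<^sub>k\<close> and \<open>x\<^sub>j \<mp> x\<^sub>k\<close> divides
  \<open>\<delta>\<^sub>j \<mp> \<delta>\<^sub>k\<close> for \<open>j \<notin> J\<close>, \<open>j < k\<close>.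
  Write \<open>S\<^sub>i = {1..<i} - J\<close> and \<open>P\<^sub>i(t) = t \<Prod>\<^bsub>j \<in> S\<^sub>i\<^esub> (t - x\<^sub>j)(t + x\<^sub>j)\<close>.
  The basis is \<open>\<theta>\<^sub>i = \<Sum>\<^bsub>k \<ge> i\<^esub> P\<^sub>i(x\<^sub>k) \<partial>\<^sub>k\<close>, of degree \<open>2|S\<^sub>i| + 1\<close>.
  Since \<open>P\<^sub>i\<close> is odd, \<open>x\<^sub>j \<mp> x\<^sub>k\<close> divides \<open>P\<^sub>i(x\<^sub>j) \<mp> P\<^sub>i(x\<^sub>k)\<close>; and for \<open>j < i \<le> k\<close> with
  \<open>j \<notin> J\<close> the polynomial \<open>P\<^sub>i(x\<^sub>k)\<close> vanishes at \<open>x\<^sub>k = \<plusminus>x\<^sub>j\<close>, so \<open>\<theta>\<^sub>i \<in> Der\<close>.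
  The coefficient matrix of the \<open>\<theta>\<^sub>i\<close> is triangular with nonzero diagonal \<open>P\<^sub>i(x\<^sub>i)\<close>, which
  gives independence. Conversely, if \<open>\<delta> \<in> Der\<close> has \<open>\<delta>\<^sub>k = 0\<close> for \<open>k < i\<close>, then each of the
  pairwise non-associate linear factors \<open>x\<^sub>i\<close>, \<open>x\<^sub>i \<mp> x\<^sub>j\<close> (\<open>j \<in> S\<^sub>i\<close>) of \<open>P\<^sub>i(x\<^sub>i)\<close> divides \<open>\<delta>\<^sub>i\<close>,
  so subtracting \<open>(\<delta>\<^sub>i / P\<^sub>i(x\<^sub>i)) \<theta>\<^sub>i\<close> kills the \<open>i\<close>-th coefficient; elimination from \<open>i = 1\<close>
  to \<open>n\<close> expresses \<open>\<delta>\<close> in the \<open>\<theta>\<^sub>i\<close>.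
\<close>

section \<open>Ring homomorphisms defined on monomials\<close>

abbreviation Const :: "complex \<Rightarrow> mpoly" where
  "Const c \<equiv> Poly_Mapping.single 0 c"

abbreviation Monom :: "(nat \<Rightarrow>\<^sub>0 nat) \<Rightarrow> mpoly" where
  "Monom m \<equiv> Poly_Mapping.single m 1"

lemma keys_add_monomial:
  "Poly_Mapping.keys ((m :: nat \<Rightarrow>\<^sub>0 nat) + m') = Poly_Mapping.keys m \<union> Poly_Mapping.keys m'"
  by (auto simp: in_keys_iff lookup_add)

lemma sum_keys_single:
  "(p :: mpoly) = (\<Sum>m\<in>Poly_Mapping.keys p. Poly_Mapping.single m (Poly_Mapping.lookup p m))"
proof (rule poly_mapping_eqI)
  fix k
  have "(\<Sum>m\<in>Poly_Mapping.keys p. Poly_Mapping.lookup (Poly_Mapping.single m (Poly_Mapping.lookup p m)) k)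
      = Poly_Mapping.lookup p k"
    by (cases "k \<in> Poly_Mapping.keys p")
       (auto simp: lookup_single when_def in_keys_iff sum.delta' intro: sum.neutral)
  then show "Poly_Mapping.lookup p k
      = Poly_Mapping.lookup (\<Sum>m\<in>Poly_Mapping.keys p. Poly_Mapping.single m (Poly_Mapping.lookup p m)) k"
    by (simp add: lookup_sum)
qed

definition extend_monomials :: "((nat \<Rightarrow>\<^sub>0 nat) \<Rightarrow> mpoly) \<Rightarrow> mpoly \<Rightarrow> mpoly" where
  "extend_monomials f p = (\<Sum>m\<in>Poly_Mapping.keys p. Const (Poly_Mapping.lookup p m) * f m)"

lemma extend_monomials_add:
  "extend_monomials f (p + q) = extend_monomials f p + extend_monomials f q"
  unfolding extend_monomials_def
  by (rule setsum_keys_plus_distrib[where f = "\<lambda>m c. Const c * f m"]) (simp_all add: single_add distrib_right)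

lemma extend_monomials_zero [simp]: "extend_monomials f 0 = 0"
  by (simp add: extend_monomials_def)

lemma extend_monomials_diff:
  "extend_monomials f (p - q) = extend_monomials f p - extend_monomials f q"
  using extend_monomials_add[of f "p - q" q] by simp

lemma extend_monomials_sum:
  "extend_monomials f (sum g A) = (\<Sum>a\<in>A. extend_monomials f (g a))"
  by (induction A rule: infinite_finite_induct) (auto simp: extend_monomials_add)

lemma extend_monomials_single:
  "extend_monomials f (Poly_Mapping.single m c) = Const c * f m"
  by (cases "c = 0") (auto simp: extend_monomials_def)

lemma extend_monomials_one: "extend_monomials f 1 = f 0"
  using extend_monomials_single[of f 0 1] by (simp del: single_one add: single_one[symmetric])

lemma extend_monomials_id:
  assumes "\<And>m. m \<in> Poly_Mapping.keys p \<Longrightarrow> f m = Monom m"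
  shows "extend_monomials f p = p"
proof -
  have "extend_monomials f p = (\<Sum>m\<in>Poly_Mapping.keys p. Poly_Mapping.single m (Poly_Mapping.lookup p m))"
    unfolding extend_monomials_def by (rule sum.cong) (auto simp: assms mult_single)
  then show ?thesis using sum_keys_single[of p] by simp
qed

lemma extend_monomials_mult:
  assumes "\<And>m m'. f (m + m') = f m * f m'"
  shows "extend_monomials f (p * q) = extend_monomials f p * extend_monomials f q"
proof -
  let ?P = "Poly_Mapping.keys p" and ?Q = "Poly_Mapping.keys q"
  have "p * q = (\<Sum>m\<in>?P. Poly_Mapping.single m (Poly_Mapping.lookup p m))
              * (\<Sum>m\<in>?Q. Poly_Mapping.single m (Poly_Mapping.lookup q m))"
    using sum_keys_single[of p] sum_keys_single[of q] by simp
  also have "\<dots> = (\<Sum>m\<in>?P. \<Sum>m'\<in>?Q.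
                   Poly_Mapping.single (m + m') (Poly_Mapping.lookup p m * Poly_Mapping.lookup q m'))"
    by (simp add: sum_product mult_single)
  finally have "extend_monomials f (p * q) = (\<Sum>m\<in>?P. \<Sum>m'\<in>?Q.
                   Const (Poly_Mapping.lookup p m * Poly_Mapping.lookup q m') * f (m + m'))"
    by (simp add: extend_monomials_sum extend_monomials_single)
  also have "\<dots> = (\<Sum>m\<in>?P. \<Sum>m'\<in>?Q.
                   (Const (Poly_Mapping.lookup p m) * f m) * (Const (Poly_Mapping.lookup q m') * f m'))"
    by (simp add: assms mult_single mult_ac)
  also have "\<dots> = extend_monomials f p * extend_monomials f q"
    by (simp add: extend_monomials_def sum_product)
  finally show ?thesis .
qed

lemma extend_monomials_prod:
  assumes "\<And>m m'. f (m + m') = f m * f m'" and "f 0 = 1"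
  shows "extend_monomials f (prod g A) = (\<Prod>a\<in>A. extend_monomials f (g a))"
  by (induction A rule: infinite_finite_induct)
     (simp_all add: extend_monomials_mult[OF assms(1)] extend_monomials_one assms(2))

section \<open>Substitution and the factor theorem\<close>

definition var_free :: "nat \<Rightarrow> mpoly \<Rightarrow> bool" where
  "var_free i p \<longleftrightarrow> (\<forall>m\<in>Poly_Mapping.keys p. Poly_Mapping.lookup m i = 0)"

definition subst_monomial :: "nat \<Rightarrow> mpoly \<Rightarrow> (nat \<Rightarrow>\<^sub>0 nat) \<Rightarrow> mpoly" where
  "subst_monomial i b m =
     Monom (m - Poly_Mapping.single i (Poly_Mapping.lookup m i)) * b ^ Poly_Mapping.lookup m i"

definition subst :: "nat \<Rightarrow> mpoly \<Rightarrow> mpoly \<Rightarrow> mpoly" where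
  "subst i b = extend_monomials (subst_monomial i b)"

lemma subst_monomial_add:
  "subst_monomial i b (m + m') = subst_monomial i b m * subst_monomial i b m'"
proof -
  let ?A = "m - Poly_Mapping.single i (Poly_Mapping.lookup m i)"
    and ?B = "m' - Poly_Mapping.single i (Poly_Mapping.lookup m' i)"
  have "m + m' - Poly_Mapping.single i (Poly_Mapping.lookup (m + m') i) = ?A + ?B"
    by (rule poly_mapping_eqI) (auto simp: lookup_minus lookup_add lookup_single when_def)
  then have "subst_monomial i b (m + m')
      = Monom ?A * Monom ?B * (b ^ Poly_Mapping.lookup m i * b ^ Poly_Mapping.lookup m' i)"
    by (simp add: subst_monomial_def lookup_add power_add mult_single)
  then show ?thesis by (simp add: subst_monomial_def mult_ac)
qed

lemma subst_monomial_zero: "subst_monomial i b 0 = 1"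
  by (simp add: subst_monomial_def)

lemma subst_mult: "subst i b (p * q) = subst i b p * subst i b q"
  unfolding subst_def by (rule extend_monomials_mult) (rule subst_monomial_add)

lemma subst_prod: "subst i b (prod g A) = (\<Prod>a\<in>A. subst i b (g a))"
  unfolding subst_def by (rule extend_monomials_prod) (rule subst_monomial_add, rule subst_monomial_zero)

lemma subst_diff: "subst i b (p - q) = subst i b p - subst i b q"
  by (simp add: subst_def extend_monomials_diff)

lemma subst_var_free: "var_free i p \<Longrightarrow> subst i b p = p"
  unfolding subst_def var_free_def by (rule extend_monomials_id) (simp add: subst_monomial_def)

lemma subst_Var_same: "subst i b (Var i) = b"
  by (simp add: subst_def subst_monomial_def Var_def extend_monomials_single)

lemma var_free_zero: "var_free i 0"
  by (simp add: var_free_def)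

lemma var_free_uminus: "var_free i (- p) \<longleftrightarrow> var_free i p"
  by (simp add: var_free_def)

lemma var_free_Var: "k \<noteq> i \<Longrightarrow> var_free i (Var k)"
  by (simp add: var_free_def Var_def lookup_single)

lemma Var_power: "Var i ^ k = Monom (Poly_Mapping.single i k)"
  by (induction k) (simp_all add: Var_def mult_single single_add[symmetric])

lemma factor_theorem:
  assumes "subst i b p = 0"
  shows "(Var i - b) dvd p"
proof -
  have "p - subst i b p
      = (\<Sum>m\<in>Poly_Mapping.keys p. Const (Poly_Mapping.lookup p m) * (Monom m - subst_monomial i b m))"
    using extend_monomials_id[of p Monom]
    by (simp add: subst_def extend_monomials_def right_diff_distrib sum_subtractf)
  also have "(Var i - b) dvd \<dots>"
  proof (rule dvd_sum)
    fix m :: "nat \<Rightarrow>\<^sub>0 nat"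
    let ?k = "Poly_Mapping.lookup m i"
    let ?r = "m - Poly_Mapping.single i ?k"
    have "m = ?r + Poly_Mapping.single i ?k"
      by (rule poly_mapping_eqI) (auto simp: lookup_minus lookup_add lookup_single when_def)
    then have "Monom m = Monom ?r * Var i ^ ?k"
      by (metis Var_power mult_single mult_1)
    then have "Monom m - subst_monomial i b m = Monom ?r * (Var i ^ ?k - b ^ ?k)"
      by (simp add: subst_monomial_def right_diff_distrib)
    moreover have "(Var i - b) dvd (Var i ^ ?k - b ^ ?k)"
      using power_diff_sumr2 by (rule dvdI)
    ultimately show "(Var i - b) dvd Const (Poly_Mapping.lookup p m) * (Monom m - subst_monomial i b m)"
      by simp
  qed
  finally show ?thesis using assms by simp
qed

lemma subst_eq_0_if_dvd:
  assumes "(Var i - b) dvd p" and "var_free i b"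
  shows "subst i b p = 0"
proof -
  obtain q where "p = (Var i - b) * q" using assms(1) by blast
  then show ?thesis by (simp add: subst_mult subst_diff subst_Var_same subst_var_free assms(2))
qed

text \<open>Instead of unique factorisation, each root is substituted in turn.\<close>
lemma prod_linear_factors_dvd:
  assumes "finite A" "\<And>a. a \<in> A \<Longrightarrow> var_free i a" "\<And>a. a \<in> A \<Longrightarrow> (Var i - a) dvd p"
  shows "(\<Prod>a\<in>A. Var i - a) dvd p"
  using assms
proof (induction A rule: finite_induct)
  case empty
  then show ?case by simp
next
  case (insert c A)
  then obtain q where q: "p = (\<Prod>a\<in>A. Var i - a) * q" by (auto elim: dvdE)
  have "subst i c p = 0"
    using insert by (intro subst_eq_0_if_dvd) auto
  then have "(\<Prod>a\<in>A. c - a) * subst i c q = 0"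
    using q insert by (simp add: subst_mult subst_prod subst_diff subst_Var_same subst_var_free)
  moreover have "(\<Prod>a\<in>A. c - a) \<noteq> 0"
    using insert by (auto simp: prod_zero_iff)
  ultimately have "(Var i - c) dvd q"
    by (intro factor_theorem) simp
  then show ?case using q insert by (simp add: mult_dvd_mono)
qed

section \<open>The subring \<open>C[x\<^sub>1, \<dots>, x\<^sub>n]\<close>\<close>

definition restrict_vars :: "nat \<Rightarrow> mpoly \<Rightarrow> mpoly" where
  "restrict_vars n = extend_monomials (\<lambda>m. if Poly_Mapping.keys m \<subseteq> {1..n} then Monom m else 0)"

lemma restrict_vars_mult: "restrict_vars n (p * q) = restrict_vars n p * restrict_vars n q"
  unfolding restrict_vars_def by (rule extend_monomials_mult) (auto simp: keys_add_monomial mult_single)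

lemma restrict_vars_add: "restrict_vars n (p + q) = restrict_vars n p + restrict_vars n q"
  by (simp add: restrict_vars_def extend_monomials_add)

lemma restrict_vars_in_polyring: "restrict_vars n p \<in> polyring n"
proof -
  let ?t = "\<lambda>m. if Poly_Mapping.keys m \<subseteq> {1..n} then Poly_Mapping.single m (Poly_Mapping.lookup p m) else 0"
  have sum: "restrict_vars n p = (\<Sum>m\<in>Poly_Mapping.keys p. ?t m)"
    unfolding restrict_vars_def extend_monomials_def by (rule sum.cong) (auto simp: mult_single)
  have "Poly_Mapping.keys m' \<subseteq> {1..n}" if "m' \<in> Poly_Mapping.keys (?t m)" for m m'
    using that by (auto split: if_splits)
  then show ?thesis
    unfolding polyring_def mem_Collect_eq sum using keys_sum[of ?t "Poly_Mapping.keys p"] by blast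
qed

lemma polyring_iff_restrict_vars: "p \<in> polyring n \<longleftrightarrow> restrict_vars n p = p"
proof
  assume "p \<in> polyring n"
  then show "restrict_vars n p = p"
    unfolding restrict_vars_def polyring_def by (intro extend_monomials_id) auto
qed (metis restrict_vars_in_polyring)

lemma polyring_mult: "p \<in> polyring n \<Longrightarrow> q \<in> polyring n \<Longrightarrow> p * q \<in> polyring n"
  by (simp add: polyring_iff_restrict_vars restrict_vars_mult)

lemma polyring_add: "p \<in> polyring n \<Longrightarrow> q \<in> polyring n \<Longrightarrow> p + q \<in> polyring n"
  by (simp add: polyring_iff_restrict_vars restrict_vars_add)

lemma polyring_zero: "0 \<in> polyring n"
  by (simp add: polyring_def)

lemma polyring_one: "1 \<in> polyring n"
  by (simp add: polyring_def)

lemma polyring_uminus: "p \<in> polyring n \<Longrightarrow> - p \<in> polyring n"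
  by (simp add: polyring_def)

lemma polyring_diff: "p \<in> polyring n \<Longrightarrow> q \<in> polyring n \<Longrightarrow> p - q \<in> polyring n"
  using polyring_add[of p n "- q"] polyring_uminus[of q n] by simp

lemma polyring_prod: "(\<And>a. a \<in> A \<Longrightarrow> g a \<in> polyring n) \<Longrightarrow> prod g A \<in> polyring n"
  by (induction A rule: infinite_finite_induct) (auto intro: polyring_one polyring_mult)

lemma polyring_sum: "(\<And>a. a \<in> A \<Longrightarrow> g a \<in> polyring n) \<Longrightarrow> sum g A \<in> polyring n"
  by (induction A rule: infinite_finite_induct) (auto intro: polyring_zero polyring_add)

lemma polyring_single: "Poly_Mapping.keys m \<subseteq> {1..n} \<Longrightarrow> Poly_Mapping.single m c \<in> polyring n"
  by (simp add: polyring_def)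

lemma polyring_Var: "k \<in> {1..n} \<Longrightarrow> Var k \<in> polyring n"
  by (simp add: Var_def polyring_single)

lemma polyring_dvd_imp_quotient:
  assumes "p \<in> polyring n" "a \<in> polyring n" "a \<noteq> 0" "a dvd p"
  shows "\<exists>q\<in>polyring n. p = a * q"
proof -
  obtain q where q: "p = a * q" using assms(4) by (rule dvdE)
  then have "a * restrict_vars n q = a * q"
    using assms(1,2) by (metis polyring_iff_restrict_vars restrict_vars_mult)
  then have "restrict_vars n q = q" using assms(3) by simp
  then show ?thesis using q restrict_vars_in_polyring[of n q] by metis
qed

section \<open>Derivations\<close>

lemma pdiff_add: "pdiff i (p + q) = pdiff i p + pdiff i q"
  unfolding pdiff_def
  by (rule setsum_keys_plus_distrib) (simp_all add: single_add distrib_left)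

lemma pdiff_uminus: "pdiff i (- p) = - pdiff i p"
  by (simp add: pdiff_def single_uminus sum_negf)

lemma pdiff_diff: "pdiff i (p - q) = pdiff i p - pdiff i q"
  using pdiff_add[of i p "- q"] by (simp add: pdiff_uminus)

lemma pdiff_Var: "pdiff i (Var k) = (if i = k then 1 else 0)"
  by (simp add: pdiff_def Var_def lookup_single when_def)

lemma pdiff_in_polyring:
  assumes "p \<in> polyring n"
  shows "pdiff i p \<in> polyring n"
  unfolding pdiff_def
proof (intro polyring_sum polyring_single)
  fix m assume "m \<in> Poly_Mapping.keys p"
  then have "Poly_Mapping.keys m \<subseteq> {1..n}"
    using assms by (simp add: polyring_def)
  moreover have "Poly_Mapping.keys (m - Poly_Mapping.single i 1) \<subseteq> Poly_Mapping.keys m"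
    by (auto simp: in_keys_iff lookup_minus)
  ultimately show "Poly_Mapping.keys (m - Poly_Mapping.single i 1) \<subseteq> {1..n}"
    by blast
qed

lemma apply_der_Var: "k \<in> {1..n} \<Longrightarrow> apply_der n \<delta> (Var k) = \<delta> k"
  by (simp add: apply_der_def pdiff_Var if_distrib cong: if_cong)

lemma apply_der_add: "apply_der n \<delta> (p + q) = apply_der n \<delta> p + apply_der n \<delta> q"
  by (simp add: apply_der_def pdiff_add distrib_left sum.distrib)

lemma apply_der_diff: "apply_der n \<delta> (p - q) = apply_der n \<delta> p - apply_der n \<delta> q"
  by (simp add: apply_der_def pdiff_diff right_diff_distrib sum_subtractf)

lemma apply_der_in_polyring:
  "is_der n \<delta> \<Longrightarrow> p \<in> polyring n \<Longrightarrow> apply_der n \<delta> p \<in> polyring n"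
  unfolding apply_der_def is_der_def by (auto intro!: polyring_sum polyring_mult pdiff_in_polyring)

lemma Der_arr_iff_dvd:
  assumes "A \<subseteq> polyring n" "0 \<notin> A"
  shows "\<delta> \<in> Der_arr n A \<longleftrightarrow> is_der n \<delta> \<and> (\<forall>\<alpha>\<in>A. \<alpha> dvd apply_der n \<delta> \<alpha>)"
  using assms by (auto simp: Der_arr_def intro!: polyring_dvd_imp_quotient apply_der_in_polyring)

lemma mon_degree_add: "mon_degree (m + m') = mon_degree m + mon_degree m'"
proof -
  let ?S = "Poly_Mapping.keys m \<union> Poly_Mapping.keys m'"
  have "mon_degree k = (\<Sum>i\<in>?S. Poly_Mapping.lookup k i)" if "Poly_Mapping.keys k \<subseteq> ?S" for k
    unfolding mon_degree_def using that by (intro sum.mono_neutral_left) (auto simp: in_keys_iff)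
  then show ?thesis
    by (simp add: keys_add_monomial lookup_add sum.distrib)
qed

lemma homogeneous_mult: "homogeneous d p \<Longrightarrow> homogeneous e q \<Longrightarrow> homogeneous (d + e) (p * q)"
  unfolding homogeneous_def using keys_mult[of p q] by (fastforce simp: mon_degree_add)

lemma homogeneous_diff: "homogeneous d p \<Longrightarrow> homogeneous d q \<Longrightarrow> homogeneous d (p - q)"
  unfolding homogeneous_def diff_conv_add_uminus using keys_add[of p "- q"] by auto

lemma homogeneous_uminus: "homogeneous d (- p) \<longleftrightarrow> homogeneous d p"
  by (simp add: homogeneous_def)

lemma homogeneous_zero: "homogeneous d 0"
  by (simp add: homogeneous_def)

lemma homogeneous_Var: "homogeneous 1 (Var k)"
  by (simp add: homogeneous_def Var_def mon_degree_def)

lemma homogeneous_prod: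
  "(\<And>a. a \<in> A \<Longrightarrow> homogeneous 1 (g a)) \<Longrightarrow> homogeneous (card A) (prod g A)"
proof (induction A rule: infinite_finite_induct)
  case (insert x F)
  then show ?case using homogeneous_mult[of 1 "g x" "card F" "prod g F"] by simp
qed (simp_all add: homogeneous_def mon_degree_def)

section \<open>The derivation module of \<open>\<B>\<^sub>J\<close>\<close>

lemma lookup_Var: "Poly_Mapping.lookup (Var k) m = (if m = Poly_Mapping.single k 1 then 1 else 0)"
  by (simp add: Var_def lookup_single when_def)

lemma Var_nonzero: "Var k \<noteq> 0"
  using lookup_Var[of k "Poly_Mapping.single k 1"] by auto

lemma single_one_eq_iff:
  "Poly_Mapping.single x (1 :: 'b :: zero_neq_one) = Poly_Mapping.single y 1 \<longleftrightarrow> x = y"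
  by (metis lookup_single_eq lookup_single_not_eq zero_neq_one)

lemma Var_inj: "Var k = Var l \<Longrightarrow> k = l"
  unfolding Var_def by (metis single_one_eq_iff)

lemma Var_neq_uminus_Var: "Var k \<noteq> - Var l"
proof
  assume "Var k = - Var l"
  then have "Poly_Mapping.lookup (Var k) (Poly_Mapping.single k 1)
           = - Poly_Mapping.lookup (Var l) (Poly_Mapping.single k 1)"
    by simp
  then show False by (simp add: lookup_Var split: if_splits)
qed

lemma Var_add_Var_nonzero: "Var j + Var k \<noteq> 0"
  using Var_neq_uminus_Var by (metis add_eq_0_iff)

lemma Var_diff_var_free_nonzero: "var_free i a \<Longrightarrow> Var i - a \<noteq> 0"
  by (auto simp: var_free_def Var_def)

definition B_derivation :: "nat \<Rightarrow> nat set \<Rightarrow> (nat \<Rightarrow> mpoly) \<Rightarrow> bool" where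
  "B_derivation n J \<delta> \<longleftrightarrow> is_der n \<delta> \<and> (\<forall>k\<in>{1..n}. Var k dvd \<delta> k) \<and>
     (\<forall>j k. j \<in> {1..n} - J \<longrightarrow> j < k \<longrightarrow> k \<le> n \<longrightarrow>
        (Var j - Var k) dvd (\<delta> j - \<delta> k) \<and> (Var j + Var k) dvd (\<delta> j + \<delta> k))"

lemma B_tilde_subset_polyring: "B_tilde n J \<subseteq> polyring n"
  by (auto simp: B_tilde_def intro!: polyring_Var polyring_diff polyring_add)

lemma zero_notin_B_tilde: "0 \<notin> B_tilde n J"
  by (auto simp: B_tilde_def Var_nonzero Var_add_Var_nonzero dest: Var_inj)

lemma Der_arr_B_tilde_iff: "\<delta> \<in> Der_arr n (B_tilde n J) \<longleftrightarrow> B_derivation n J \<delta>"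
proof -
  have "(\<forall>\<alpha>\<in>B_tilde n J. \<alpha> dvd apply_der n \<delta> \<alpha>) \<longleftrightarrow>
        (\<forall>k\<in>{1..n}. Var k dvd \<delta> k) \<and>
        (\<forall>j k. j \<in> {1..n} - J \<longrightarrow> j < k \<longrightarrow> k \<le> n \<longrightarrow>
           (Var j - Var k) dvd (\<delta> j - \<delta> k) \<and> (Var j + Var k) dvd (\<delta> j + \<delta> k))"
  proof (intro iffI conjI ballI allI impI)
    assume H: "\<forall>\<alpha>\<in>B_tilde n J. \<alpha> dvd apply_der n \<delta> \<alpha>"
    fix k assume k: "k \<in> {1..n}"
    then have "Var k \<in> B_tilde n J"
      unfolding B_tilde_def by blast
    then show "Var k dvd \<delta> k"
      using H k by (auto simp: apply_der_Var)
  next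
    assume H: "\<forall>\<alpha>\<in>B_tilde n J. \<alpha> dvd apply_der n \<delta> \<alpha>"
    fix j k assume jk: "j \<in> {1..n} - J" "j < k" "k \<le> n"
    then have "Var j - Var k \<in> B_tilde n J" "Var j + Var k \<in> B_tilde n J"
      unfolding B_tilde_def by blast+
    then show "(Var j - Var k) dvd (\<delta> j - \<delta> k)" and "(Var j + Var k) dvd (\<delta> j + \<delta> k)"
      using H jk by (auto simp: apply_der_add apply_der_diff apply_der_Var)
  qed (auto simp: B_tilde_def apply_der_add apply_der_diff apply_der_Var)
  then show ?thesis
    by (simp add: Der_arr_iff_dvd[OF B_tilde_subset_polyring zero_notin_B_tilde] B_derivation_def)
qed

lemma B_derivation_diff_mult:
  assumes "B_derivation n J \<delta>" "B_derivation n J \<theta>" "g \<in> polyring n"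
  shows "B_derivation n J (\<lambda>k. \<delta> k - g * \<theta> k)"
proof -
  have "is_der n (\<lambda>k. \<delta> k - g * \<theta> k)"
    using assms unfolding B_derivation_def is_der_def by (auto intro!: polyring_diff polyring_mult)
  moreover have "\<forall>k\<in>{1..n}. Var k dvd (\<delta> k - g * \<theta> k)"
    using assms unfolding B_derivation_def by (auto intro!: dvd_diff dvd_mult)
  moreover have "(Var j - Var k) dvd ((\<delta> j - g * \<theta> j) - (\<delta> k - g * \<theta> k)) \<and>
      (Var j + Var k) dvd ((\<delta> j - g * \<theta> j) + (\<delta> k - g * \<theta> k))"
    if "j \<in> {1..n} - J" "j < k" "k \<le> n" for j k
  proof -
    have "(Var j - Var k) dvd (\<delta> j - \<delta> k)" "(Var j + Var k) dvd (\<delta> j + \<delta> k)"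
      "(Var j - Var k) dvd (\<theta> j - \<theta> k)" "(Var j + Var k) dvd (\<theta> j + \<theta> k)"
      using assms that unfolding B_derivation_def by blast+
    moreover have "(\<delta> j - g * \<theta> j) - (\<delta> k - g * \<theta> k) = (\<delta> j - \<delta> k) - g * (\<theta> j - \<theta> k)"
      "(\<delta> j - g * \<theta> j) + (\<delta> k - g * \<theta> k) = (\<delta> j + \<delta> k) - g * (\<theta> j + \<theta> k)"
      by (simp_all add: algebra_simps)
    ultimately show ?thesis by (metis dvd_diff dvd_mult)
  qed
  ultimately show ?thesis unfolding B_derivation_def by blast
qed

section \<open>The basis\<close>

lemma diff_dvd_prod_diff:
  fixes x y :: "'a :: comm_ring_1"
  shows "(x - y) dvd (\<Prod>a\<in>A. x - a) - (\<Prod>a\<in>A. y - a)"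
proof (induction A rule: infinite_finite_induct)
  case (insert c A)
  have "(\<Prod>a\<in>insert c A. x - a) - (\<Prod>a\<in>insert c A. y - a)
      = (x - c) * ((\<Prod>a\<in>A. x - a) - (\<Prod>a\<in>A. y - a)) + (x - y) * (\<Prod>a\<in>A. y - a)"
    using insert(1,2) by (simp add: algebra_simps)
  then show ?case using insert.IH by simp
qed simp_all

definition basis_roots :: "nat set \<Rightarrow> nat \<Rightarrow> mpoly set" where
  "basis_roots J i = insert 0 (Var ` ({1..<i} - J) \<union> (\<lambda>j. - Var j) ` ({1..<i} - J))"

definition basis_poly :: "nat set \<Rightarrow> nat \<Rightarrow> mpoly \<Rightarrow> mpoly" where
  "basis_poly J i t = (\<Prod>a\<in>basis_roots J i. t - a)"

definition basis_der :: "nat \<Rightarrow> nat set \<Rightarrow> nat \<Rightarrow> nat \<Rightarrow> mpoly" where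
  "basis_der n J i k = (if i \<le> k \<and> 1 \<le> k \<and> k \<le> n then basis_poly J i (Var k) else 0)"

lemma finite_basis_roots: "finite (basis_roots J i)"
  by (simp add: basis_roots_def)

lemma card_basis_roots: "card (basis_roots J i) = 2 * card ({1..<i} - J) + 1"
proof -
  let ?S = "{1..<i} - J"
  have "inj_on Var ?S" "inj_on (\<lambda>j. - Var j) ?S"
    by (auto simp: inj_on_def dest: Var_inj)
  moreover have "Var ` ?S \<inter> (\<lambda>j. - Var j) ` ?S = {}"
    using Var_neq_uminus_Var by auto
  ultimately have "card (Var ` ?S \<union> (\<lambda>j. - Var j) ` ?S) = card ?S + card ?S"
    by (simp add: card_Un_disjoint card_image)
  moreover have "0 \<notin> Var ` ?S \<union> (\<lambda>j. - Var j) ` ?S"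
    using Var_nonzero by auto
  ultimately show ?thesis
    by (simp add: basis_roots_def)
qed

lemma zero_in_basis_roots: "0 \<in> basis_roots J i"
  by (simp add: basis_roots_def)

lemma Var_in_basis_roots: "j \<in> {1..<i} - J \<Longrightarrow> Var j \<in> basis_roots J i"
  by (simp add: basis_roots_def)

lemma uminus_Var_in_basis_roots: "j \<in> {1..<i} - J \<Longrightarrow> - Var j \<in> basis_roots J i"
  by (simp add: basis_roots_def)

lemma uminus_basis_roots: "uminus ` basis_roots J i = basis_roots J i"
proof -
  have *: "uminus ` basis_roots J i \<subseteq> basis_roots J i"
    by (auto simp: basis_roots_def)
  then have "basis_roots J i \<subseteq> uminus ` basis_roots J i"
    using image_mono[OF *, of uminus] by (simp add: image_image)
  with * show ?thesis by blast
qed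

lemma var_free_basis_roots: "a \<in> basis_roots J i \<Longrightarrow> i \<le> k \<Longrightarrow> var_free k a"
  by (auto simp: basis_roots_def var_free_uminus var_free_zero intro!: var_free_Var)

lemma basis_roots_subset_polyring: "i \<le> Suc n \<Longrightarrow> basis_roots J i \<subseteq> polyring n"
  by (auto simp: basis_roots_def polyring_zero intro!: polyring_uminus polyring_Var)

lemma basis_poly_in_polyring: "i \<le> Suc n \<Longrightarrow> t \<in> polyring n \<Longrightarrow> basis_poly J i t \<in> polyring n"
  unfolding basis_poly_def using basis_roots_subset_polyring
  by (blast intro: polyring_prod polyring_diff)

lemma basis_poly_uminus: "basis_poly J i (- t) = - basis_poly J i t"
proof -
  have "basis_poly J i (- t) = (- 1) ^ card (basis_roots J i) * (\<Prod>a\<in>basis_roots J i. t - (- a))"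
    unfolding basis_poly_def
    by (subst prod_uminus[symmetric]) (intro prod.cong refl, simp add: algebra_simps)
  also have "(\<Prod>a\<in>basis_roots J i. t - (- a)) = (\<Prod>a\<in>uminus ` basis_roots J i. t - a)"
    by (simp add: prod.reindex inj_on_def)
  finally show ?thesis
    by (simp add: uminus_basis_roots basis_poly_def card_basis_roots)
qed

lemma dvd_basis_poly: "a \<in> basis_roots J i \<Longrightarrow> (t - a) dvd basis_poly J i t"
  unfolding basis_poly_def using finite_basis_roots by (rule dvd_prodI)

lemma basis_poly_Var_nonzero: "basis_poly J i (Var i) \<noteq> 0"
  using finite_basis_roots var_free_basis_roots Var_diff_var_free_nonzero
  by (auto simp: basis_poly_def prod_zero_iff)

lemma homogeneous_basis_poly: "homogeneous (card (basis_roots J i)) (basis_poly J i (Var k))"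
  unfolding basis_poly_def
  by (intro homogeneous_prod homogeneous_diff homogeneous_Var)
     (auto simp: basis_roots_def homogeneous_zero homogeneous_Var[simplified] homogeneous_uminus)

lemma homogeneous_der_basis_der:
  "homogeneous_der n (2 * card ({1..<i} - J) + 1) (basis_der n J i)"
  using homogeneous_basis_poly[of J i] card_basis_roots[of J i]
  by (auto simp: homogeneous_der_def basis_der_def homogeneous_zero)

lemma basis_der_B_derivation:
  assumes "1 \<le> i" "i \<le> n"
  shows "B_derivation n J (basis_der n J i)"
proof -
  let ?\<theta> = "basis_der n J i" and ?P = "basis_poly J i"
  have "is_der n ?\<theta>"
    using assms by (auto simp: is_der_def basis_der_def polyring_zero intro!: basis_poly_in_polyring polyring_Var)
  moreover have "Var k dvd ?\<theta> k" for k
    using dvd_basis_poly[OF zero_in_basis_roots, of "Var k" J i] by (simp add: basis_der_def)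
  moreover have "(Var j - Var k) dvd (?\<theta> j - ?\<theta> k) \<and> (Var j + Var k) dvd (?\<theta> j + ?\<theta> k)"
    if jk: "j \<in> {1..n} - J" "j < k" "k \<le> n" for j k
  proof (cases "i \<le> j")
    case True
    have "(Var j - - Var k) dvd ?P (Var j) - ?P (- Var k)"
      unfolding basis_poly_def by (rule diff_dvd_prod_diff)
    then have "(Var j + Var k) dvd ?P (Var j) + ?P (Var k)"
      by (simp add: basis_poly_uminus)
    moreover have "(Var j - Var k) dvd ?P (Var j) - ?P (Var k)"
      unfolding basis_poly_def by (rule diff_dvd_prod_diff)
    ultimately show ?thesis
      using True jk by (simp add: basis_der_def)
  next
    case False
    show ?thesis
    proof (cases "i \<le> k")
      case True
      have j: "j \<in> {1..<i} - J" using False jk by auto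
      have "(Var k - Var j) dvd ?P (Var k)"
        by (rule dvd_basis_poly[OF Var_in_basis_roots[OF j]])
      then have "(Var j - Var k) dvd ?P (Var k)"
        by (metis minus_diff_eq minus_dvd_iff)
      moreover have "(Var k - - Var j) dvd ?P (Var k)"
        by (rule dvd_basis_poly[OF uminus_Var_in_basis_roots[OF j]])
      ultimately show ?thesis
        using True False jk by (simp add: basis_der_def add.commute)
    next
      case False
      then show ?thesis using \<open>\<not> i \<le> j\<close> jk by (simp add: basis_der_def)
    qed
  qed
  ultimately show ?thesis by (simp add: B_derivation_def)
qed

section \<open>Triangular elimination\<close>

lemma basis_poly_dvd_leading_coefficient:
  assumes \<delta>: "B_derivation n J \<delta>" and i: "1 \<le> i" "i \<le> n"
    and vanish: "\<And>k. 1 \<le> k \<Longrightarrow> k < i \<Longrightarrow> \<delta> k = 0"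
  shows "basis_poly J i (Var i) dvd \<delta> i"
  unfolding basis_poly_def
proof (rule prod_linear_factors_dvd[OF finite_basis_roots])
  fix a assume "a \<in> basis_roots J i"
  then show "var_free i a" by (rule var_free_basis_roots) simp
next
  fix a assume "a \<in> basis_roots J i"
  then consider "a = 0" | j where "j \<in> {1..<i} - J" "a = Var j" | j where "j \<in> {1..<i} - J" "a = - Var j"
    unfolding basis_roots_def by blast
  then show "(Var i - a) dvd \<delta> i"
  proof cases
    case 1
    then show ?thesis using \<delta> i by (simp add: B_derivation_def)
  next
    case (2 j)
    then have "(Var j - Var i) dvd (\<delta> j - \<delta> i)" "\<delta> j = 0"
      using \<delta> i vanish unfolding B_derivation_def by auto
    then have "(Var j - Var i) dvd \<delta> i"
      by simp
    then show ?thesis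
      using 2 by (metis minus_diff_eq minus_dvd_iff)
  next
    case (3 j)
    then have "(Var j + Var i) dvd (\<delta> j + \<delta> i)" "\<delta> j = 0"
      using \<delta> i vanish unfolding B_derivation_def by auto
    then show ?thesis using 3 by (simp add: add.commute)
  qed
qed

lemma B_derivation_eliminate:
  assumes \<delta>: "B_derivation n J \<delta>" and i: "1 \<le> i" "i \<le> n"
    and vanish: "\<And>k. 1 \<le> k \<Longrightarrow> k < i \<Longrightarrow> \<delta> k = 0"
  obtains h where "h \<in> polyring n" "B_derivation n J (\<lambda>k. \<delta> k - h * basis_der n J i k)"
    "\<And>k. 1 \<le> k \<Longrightarrow> k \<le> i \<Longrightarrow> \<delta> k - h * basis_der n J i k = 0"
proof -
  have "\<delta> i \<in> polyring n"
    using \<delta> i by (simp add: B_derivation_def is_der_def)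
  moreover have "basis_poly J i (Var i) \<in> polyring n"
    using i by (simp add: basis_poly_in_polyring polyring_Var)
  ultimately obtain h where h: "h \<in> polyring n" "\<delta> i = basis_poly J i (Var i) * h"
    using polyring_dvd_imp_quotient basis_poly_Var_nonzero
      basis_poly_dvd_leading_coefficient[OF assms] by blast
  show thesis
  proof (rule that[OF h(1)])
    show "B_derivation n J (\<lambda>k. \<delta> k - h * basis_der n J i k)"
      using B_derivation_diff_mult[OF \<delta> basis_der_B_derivation[OF i] h(1)] .
    show "\<delta> k - h * basis_der n J i k = 0" if "1 \<le> k" "k \<le> i" for k
      using that i h(2) vanish[of k] by (cases "k = i") (simp_all add: basis_der_def)
  qed
qed

lemma B_derivation_in_span:
  assumes "i \<le> Suc n" "1 \<le> i" "B_derivation n J \<delta>"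
    and "\<And>k. 1 \<le> k \<Longrightarrow> k < i \<Longrightarrow> \<delta> k = 0"
  shows "\<exists>g. (\<forall>j. g j \<in> polyring n) \<and> (\<forall>k. \<delta> k = (\<Sum>j=i..n. g j * basis_der n J j k))"
  using assms
proof (induction i arbitrary: \<delta> rule: inc_induct)
  case base
  have "\<delta> k = 0" for k
    using base by (cases "1 \<le> k \<and> k \<le> n") (auto simp: B_derivation_def is_der_def)
  then show ?case
    by (intro exI[of _ "\<lambda>_. 0"]) (simp add: polyring_zero)
next
  case (step i)
  obtain h where h: "h \<in> polyring n" "B_derivation n J (\<lambda>k. \<delta> k - h * basis_der n J i k)"
    "\<And>k. 1 \<le> k \<Longrightarrow> k \<le> i \<Longrightarrow> \<delta> k - h * basis_der n J i k = 0"
    using B_derivation_eliminate[of n J \<delta> i] step by auto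
  have "\<exists>g. (\<forall>j. g j \<in> polyring n) \<and>
      (\<forall>k. \<delta> k - h * basis_der n J i k = (\<Sum>j=Suc i..n. g j * basis_der n J j k))"
    using h(2,3) by (intro step.IH) auto
  then obtain g where g: "\<forall>j. g j \<in> polyring n"
    "\<forall>k. \<delta> k - h * basis_der n J i k = (\<Sum>j=Suc i..n. g j * basis_der n J j k)"
    by blast
  have "\<delta> k = (\<Sum>j=i..n. (g(i := h)) j * basis_der n J j k)" for k
    using g(2) step.hyps by (simp add: sum.atLeast_Suc_atMost algebra_simps)
  then show ?case
    using g(1) h(1) by (intro exI[of _ "g(i := h)"]) auto
qed

lemma basis_der_independent:
  assumes "\<forall>k. (\<Sum>j=1..n. g j * basis_der n J j k) = 0"
  shows "\<forall>j\<in>{1..n}. g j = 0"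
proof -
  have "g i = 0" if "1 \<le> i" "i \<le> n" for i
    using that
  proof (induction i rule: less_induct)
    case (less i)
    have "(\<Sum>j\<in>{1..n} - {i}. g j * basis_der n J j i) = 0"
      using less by (intro sum.neutral) (auto simp: basis_der_def not_less)
    moreover have "(\<Sum>j=1..n. g j * basis_der n J j i) = g i * basis_der n J i i + (\<Sum>j\<in>{1..n} - {i}. g j * basis_der n J j i)"
      using less.prems by (simp add: sum.remove)
    ultimately have "g i * basis_der n J i i = 0"
      using assms by simp
    then show "g i = 0"
      using less.prems basis_poly_Var_nonzero by (simp add: basis_der_def)
  qed
  then show ?thesis by auto
qed

theorem mainTheorem17:
  fixes n :: nat and J :: "nat set"
  assumes "J \<subseteq> {1..n}"
  shows "free_with_exponents n (B_tilde n J) (\<lambda>i. 2 * card ({1..<i} - J) + 1)"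
  unfolding free_with_exponents_def
proof (intro exI[of _ "basis_der n J"] conjI ballI allI impI)
  fix j assume "j \<in> {1..n}"
  then show "basis_der n J j \<in> Der_arr n (B_tilde n J)"
    by (simp add: Der_arr_B_tilde_iff basis_der_B_derivation)
  show "homogeneous_der n (2 * card ({1..<j} - J) + 1) (basis_der n J j)"
    by (rule homogeneous_der_basis_der)
next
  fix \<delta> assume "\<delta> \<in> Der_arr n (B_tilde n J)"
  then have "B_derivation n J \<delta>"
    by (simp add: Der_arr_B_tilde_iff)
  then show "\<exists>g. (\<forall>j\<in>{1..n}. g j \<in> polyring n) \<and> (\<forall>i. \<delta> i = (\<Sum>j=1..n. g j * basis_der n J j i))"
    using B_derivation_in_span[of 1 n J \<delta>] by auto
next
  fix g j assume "(\<forall>j\<in>{1..n}. g j \<in> polyring n) \<and> (\<forall>i. (\<Sum>j=1..n. g j * basis_der n J j i) = 0)"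
    and "j \<in> {1..n}"
  then show "g j = 0"
    using basis_der_independent by blast
qed

end
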